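(* For $n\ge 4$ let $G'_n$ be the directed graph with nodes $0,\dots,n-1$ and arcs: $i\to i+1$ for $0\le i\le n-5$; $(n-4)\to(n-3)$; $(n-4)\to(n-1)$; $(n-1)\to(n-2)$; $(n-2)\to(n-1)$; and $j\to 0$ for every $1\le j\le n-1$. Then $\lim_{n\to\infty}R(G'_n)=1$.
   Context: $d_G(x,y)$ is the shortest directed path length from $x$ to $y$ ($\infty$ if none). The distance-count matrix $C_G\in\mathbb{R}^{n\times n}$ has $(C_G)_{i,k}=|\{j: d_G(j,i)=k\}|$. For $\mathbf a\in\mathbb{R}^{\mathbb{N}}$ (with $a_0$ arbitrary) the linear centrality is $f^{\mathbf a}_G(i)=\sum_{k=0}^{n-1}(C_G)_{i,k}a_k$. A permutation $\pi$ of $\{0,\dots,n-1\}$ is representable by $G$ if there is $\mathbf a$ with $f^{\mathbf a}_G(\pi(0))>\dots>f^{\mathbf a}_G(\pi(n-1))$. $R(G)=|\{\pi\in S_n:\pi\text{ representable by }G\}|/n!$. *)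

theory Defs
  imports Complex_Main "HOL-Combinatorics.Permutations"
begin

definition dist_is :: "(nat \<Rightarrow> nat \<Rightarrow> bool) \<Rightarrow> nat \<Rightarrow> nat \<Rightarrow> nat \<Rightarrow> bool" where
  "dist_is E j i k \<longleftrightarrow> (E ^^ k) j i \<and> (\<forall>m<k. \<not> (E ^^ m) j i)"

definition dist_count :: "nat \<Rightarrow> (nat \<Rightarrow> nat \<Rightarrow> bool) \<Rightarrow> nat \<Rightarrow> nat \<Rightarrow> nat" where
  "dist_count n E i k = card {j. j < n \<and> dist_is E j i k}"

definition lin_centrality :: "nat \<Rightarrow> (nat \<Rightarrow> nat \<Rightarrow> bool) \<Rightarrow> (nat \<Rightarrow> real) \<Rightarrow> nat \<Rightarrow> real" where
  "lin_centrality n E a i = (\<Sum>k<n. real (dist_count n E i k) * a k)"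

definition representable :: "nat \<Rightarrow> (nat \<Rightarrow> nat \<Rightarrow> bool) \<Rightarrow> (nat \<Rightarrow> nat) \<Rightarrow> bool" where
  "representable n E \<pi> \<longleftrightarrow>
     (\<exists>a. \<forall>t. t + 1 < n \<longrightarrow> lin_centrality n E a (\<pi> t) > lin_centrality n E a (\<pi> (t + 1)))"

definition R_ratio :: "nat \<Rightarrow> (nat \<Rightarrow> nat \<Rightarrow> bool) \<Rightarrow> real" where
  "R_ratio n E = real (card {\<pi>. \<pi> permutes {..<n} \<and> representable n E \<pi>}) / fact n"

text \<open>The graph G'_n (meaningful for n >= 4).\<close>
definition G' :: "nat \<Rightarrow> nat \<Rightarrow> nat \<Rightarrow> bool" where
  "G' n u v \<longleftrightarrow>
     (u + 5 \<le> n \<and> v = u + 1)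
   \<or> (u = n - 4 \<and> v = n - 3)
   \<or> (u = n - 4 \<and> v = n - 1)
   \<or> (u = n - 1 \<and> v = n - 2)
   \<or> (u = n - 2 \<and> v = n - 1)
   \<or> (1 \<le> u \<and> u \<le> n - 1 \<and> v = 0)"

end

(*
  On G'(m+6) all distances are explicit, so the centrality of a node is an explicit linear
  form in the weights a.  Nodes 0, ..., m+4 can be given arbitrary prescribed centralities
  v 0, ..., v (m+4) (the system is triangular), but node m+5 is then forced to the value
  (S + v (m+3)) / 2, where S is a convex combination of v 0, ..., v (m+2) in which every
  weight is at least 2 / (m+6)^2.  If m+5 is to be ranked at a position t with 2 <= t <= m+3,
  give the nodes ranked above it values close to (m+6)^3 and those below values close to 0:
  each group contains a node among 0, ..., m+3, and this drags the forced value strictly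
  between the two groups.  So at least a fraction (m+2)/(m+6) of all rankings is representable.
*)
theory Submission
  imports Defs
begin

lemma relpowp_potential_le:
  assumes "\<rho> x = 0" and "\<And>u w. E u w \<Longrightarrow> \<rho> w \<le> \<rho> u + 1" and "(E ^^ k) x y"
  shows "\<rho> y \<le> k"
  using assms(3)
proof (induction k arbitrary: y)
  case 0
  then show ?case using assms(1) by simp
next
  case (Suc k)
  from Suc.prems obtain u where "(E ^^ k) x u" and "E u y" by (rule relpowp_Suc_E)
  with Suc.IH assms(2)[of u y] show ?case by fastforce
qed

lemma dist_is_iff_potential:
  assumes "\<rho> x = 0" and "\<And>u w. E u w \<Longrightarrow> \<rho> w \<le> \<rho> u + 1" and "(E ^^ \<rho> y) x y"
  shows "dist_is E x y k \<longleftrightarrow> k = \<rho> y"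
  using relpowp_potential_le[of \<rho> x E, OF assms(1,2)] assms(3)
  unfolding dist_is_def by (metis le_antisym not_le)

lemma G'_add6_iff:
  "G' (m + 6) u w \<longleftrightarrow>
     (u \<le> m + 1 \<and> w = u + 1) \<or> (u = m + 2 \<and> w = m + 3) \<or> (u = m + 2 \<and> w = m + 5)
   \<or> (u = m + 5 \<and> w = m + 4) \<or> (u = m + 4 \<and> w = m + 5) \<or> (1 \<le> u \<and> u \<le> m + 5 \<and> w = 0)"
proof -
  have "m + 6 - 4 = m + 2" "m + 6 - 3 = m + 3" "m + 6 - 2 = m + 4" "m + 6 - 1 = m + 5"
    "u + 5 \<le> m + 6 \<longleftrightarrow> u \<le> m + 1"
    by auto
  then show ?thesis unfolding G'_def by (simp only:)
qed

text \<open>G'_depth m i is the distance from node 0 to i.  Another node j reaches i along the path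
  0 \<rightarrow> \<dots> \<rightarrow> m+2 if it lies on it before i, and otherwise first steps back to 0, except
  for the two-cycle between m+4 and m+5.\<close>

definition G'_depth :: "nat \<Rightarrow> nat \<Rightarrow> nat" where
  "G'_depth m i = (if i = m + 5 then m + 3 else i)"

definition G'_dist :: "nat \<Rightarrow> nat \<Rightarrow> nat \<Rightarrow> nat" where
  "G'_dist m j i =
     (if j = i then 0
      else if j = m + 4 \<and> i = m + 5 \<or> j = m + 5 \<and> i = m + 4 then 1
      else if j \<le> m + 2 \<and> j \<le> G'_depth m i then G'_depth m i - j
      else G'_depth m i + 1)"

lemma G'_dist_edge_le: "G' (m + 6) u w \<Longrightarrow> G'_dist m j w \<le> G'_dist m j u + 1"
  unfolding G'_add6_iff by (elim disjE conjE) (auto simp: G'_dist_def G'_depth_def)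

lemma relpowp_G'_path: "j \<le> i \<Longrightarrow> i \<le> m + 2 \<Longrightarrow> (G' (m + 6) ^^ (i - j)) j i"
proof (induction i)
  case 0
  then show ?case by simp
next
  case (Suc i)
  show ?case
  proof (cases "j = Suc i")
    case False
    with Suc have "(G' (m + 6) ^^ (i - j)) j i" by simp
    moreover have "G' (m + 6) i (Suc i)" using Suc.prems by (simp add: G'_add6_iff)
    ultimately have "(G' (m + 6) ^^ Suc (i - j)) j (Suc i)" by (rule relpowp_Suc_I)
    with False Suc.prems show ?thesis by (simp add: Suc_diff_le)
  qed simp
qed

lemma relpowp_G'_depth:
  assumes "j \<le> m + 2" and "j \<le> G'_depth m i" and "i < m + 6"
  shows "(G' (m + 6) ^^ (G'_depth m i - j)) j i"
proof -
  let ?E = "G' (m + 6)"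
  have to_m2: "(?E ^^ (m + 2 - j)) j (m + 2)" using assms(1) by (rule relpowp_G'_path) simp
  consider "i \<le> m + 2" | "i = m + 3" | "i = m + 5" | "i = m + 4" using assms(3) by linarith
  then show ?thesis
  proof cases
    case 1
    then show ?thesis using assms(2) relpowp_G'_path[of j i m] by (simp add: G'_depth_def)
  next
    case 2
    have "(?E ^^ Suc (m + 2 - j)) j (m + 3)"
      using to_m2 by (rule relpowp_Suc_I) (simp add: G'_add6_iff)
    with 2 assms(1) show ?thesis
      by (simp add: G'_depth_def Suc_diff_le numeral_eq_Suc del: relpowp.simps)
  next
    case 3
    have "(?E ^^ Suc (m + 2 - j)) j (m + 5)"
      using to_m2 by (rule relpowp_Suc_I) (simp add: G'_add6_iff)
    with 3 assms(1) show ?thesis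
      by (simp add: G'_depth_def Suc_diff_le numeral_eq_Suc del: relpowp.simps)
  next
    case 4
    have "(?E ^^ Suc (m + 2 - j)) j (m + 5)"
      using to_m2 by (rule relpowp_Suc_I) (simp add: G'_add6_iff)
    then have "(?E ^^ Suc (Suc (m + 2 - j))) j (m + 4)"
      by (rule relpowp_Suc_I) (simp add: G'_add6_iff)
    with 4 assms(1) show ?thesis
      by (simp add: G'_depth_def Suc_diff_le numeral_eq_Suc del: relpowp.simps)
  qed
qed

lemma relpowp_G'_dist:
  assumes "j < m + 6" and "i < m + 6"
  shows "(G' (m + 6) ^^ G'_dist m j i) j i"
proof -
  let ?E = "G' (m + 6)"
  consider "j = i" | "j = m + 4 \<and> i = m + 5 \<or> j = m + 5 \<and> i = m + 4"
    | "j \<noteq> i" "j \<le> m + 2" "j \<le> G'_depth m i"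
    | "j \<noteq> i" "\<not> (j = m + 4 \<and> i = m + 5 \<or> j = m + 5 \<and> i = m + 4)"
      "\<not> (j \<le> m + 2 \<and> j \<le> G'_depth m i)"
    by blast
  then show ?thesis
  proof cases
    case 2
    then have "?E j i" by (auto simp: G'_add6_iff)
    with 2 show ?thesis by (auto simp: G'_dist_def)
  next
    case 3
    then show ?thesis using relpowp_G'_depth[of j m i] assms(2) by (simp add: G'_dist_def)
  next
    case 4
    then have "j \<noteq> 0" by (auto simp: G'_depth_def)
    with assms(1) have "?E j 0" by (simp add: G'_add6_iff)
    moreover have "(?E ^^ G'_depth m i) 0 i" using relpowp_G'_depth[of 0 m i] assms(2) by simp
    ultimately have "(?E ^^ Suc (G'_depth m i)) j i" by (rule relpowp_Suc_I2)
    with 4 show ?thesis by (auto simp: G'_dist_def simp del: relpowp.simps)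
  qed (simp add: G'_dist_def)
qed

lemma dist_is_G'_iff:
  assumes "j < m + 6" and "i < m + 6"
  shows "dist_is (G' (m + 6)) j i k \<longleftrightarrow> k = G'_dist m j i"
  using G'_dist_edge_le relpowp_G'_dist[OF assms]
  by (intro dist_is_iff_potential) (auto simp: G'_dist_def)

lemma lin_centrality_eq_sum_dist:
  assumes "\<And>j k. j < n \<Longrightarrow> dist_is E j i k \<longleftrightarrow> k = d j" and "\<And>j. j < n \<Longrightarrow> d j < n"
  shows "lin_centrality n E a i = (\<Sum>j<n. a (d j))"
proof -
  have "(\<Sum>j<n. a (d j)) = (\<Sum>k<n. \<Sum>j\<in>{j\<in>{..<n}. d j = k}. a (d j))"
    by (rule sum.group[symmetric]) (use assms(2) in auto)
  also have "\<dots> = (\<Sum>k<n. real (dist_count n E i k) * a k)"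
  proof (rule sum.cong[OF refl])
    fix k
    have "{j\<in>{..<n}. d j = k} = {j. j < n \<and> dist_is E j i k}" using assms(1) by auto
    moreover have "(\<Sum>j\<in>{j\<in>{..<n}. d j = k}. a (d j)) = (\<Sum>j\<in>{j\<in>{..<n}. d j = k}. a k)"
      by (rule sum.cong) auto
    ultimately show "(\<Sum>j\<in>{j\<in>{..<n}. d j = k}. a (d j)) = real (dist_count n E i k) * a k"
      unfolding dist_count_def by simp
  qed
  finally show ?thesis unfolding lin_centrality_def ..
qed

lemma lin_centrality_G':
  "i < m + 6 \<Longrightarrow> lin_centrality (m + 6) (G' (m + 6)) a i = (\<Sum>j<m + 6. a (G'_dist m j i))"
  by (rule lin_centrality_eq_sum_dist) (auto simp: dist_is_G'_iff G'_dist_def G'_depth_def)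

lemma sum_atMost_reflect:
  fixes f :: "nat \<Rightarrow> 'a::comm_monoid_add"
  assumes "n \<le> p"
  shows "(\<Sum>j\<le>n. f (p - j)) = (\<Sum>k\<le>n. f (k + (p - n)))"
proof -
  have "(\<Sum>j\<le>n. f (p - j)) = (\<Sum>j\<le>n. f (n - j + (p - n)))"
    using assms by (intro sum.cong) auto
  also have "\<dots> = (\<Sum>k\<le>n. f (k + (p - n)))"
    using sum.atLeastAtMost_rev[of "\<lambda>k. f (k + (p - n))" 0 n] by (simp add: atMost_atLeast0)
  finally show ?thesis .
qed

lemma sum_lessThan_add6:
  fixes g :: "nat \<Rightarrow> 'a::comm_monoid_add"
  shows "(\<Sum>j<m + 6. g j) = (\<Sum>j\<le>m + 2. g j) + g (m + 3) + g (m + 4) + g (m + 5)"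
  by (simp add: numeral_eq_Suc lessThan_Suc_atMost[symmetric] add_ac)

lemma centrality_G'_path:
  fixes a :: "nat \<Rightarrow> real"
  assumes "i \<le> m + 2"
  shows "(\<Sum>j<m + 6. a (G'_dist m j i)) = (\<Sum>k\<le>i. a k) + real (m + 5 - i) * a (i + 1)"
proof -
  have split: "{..<m + 6} = {..i} \<union> {i<..<m + 6}" using assms by auto
  have "(\<Sum>j<m + 6. a (G'_dist m j i))
      = (\<Sum>j\<le>i. a (G'_dist m j i)) + (\<Sum>j\<in>{i<..<m + 6}. a (G'_dist m j i))"
    unfolding split by (rule sum.union_disjoint) auto
  also have "(\<Sum>j\<le>i. a (G'_dist m j i)) = (\<Sum>j\<le>i. a (i - j))"
    using assms by (intro sum.cong) (auto simp: G'_dist_def G'_depth_def)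
  also have "\<dots> = (\<Sum>k\<le>i. a k)" by (simp add: sum_atMost_reflect del: sum.atMost_Suc)
  also have "(\<Sum>j\<in>{i<..<m + 6}. a (G'_dist m j i)) = (\<Sum>j\<in>{i<..<m + 6}. a (i + 1))"
    using assms by (intro sum.cong) (auto simp: G'_dist_def G'_depth_def)
  also have "\<dots> = real (m + 5 - i) * a (i + 1)"
    using assms by simp
  finally show ?thesis .
qed

lemma centrality_G'_m3:
  fixes a :: "nat \<Rightarrow> real"
  shows "(\<Sum>j<m + 6. a (G'_dist m j (m + 3))) = (\<Sum>k\<le>m + 3. a k) + 2 * a (m + 4)"
proof -
  have "(\<Sum>j\<le>m + 2. a (G'_dist m j (m + 3))) = (\<Sum>j\<le>m + 2. a (m + 3 - j))"
    by (intro sum.cong) (auto simp: G'_dist_def G'_depth_def)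
  also have "\<dots> = (\<Sum>k\<le>m + 2. a (k + 1))"
    by (simp add: sum_atMost_reflect del: sum.atMost_Suc)
  finally have reflect: "(\<Sum>j\<le>m + 2. a (G'_dist m j (m + 3))) = (\<Sum>k\<le>m + 2. a (k + 1))" .
  have shift: "(\<Sum>k\<le>m + 3. a k) = a 0 + (\<Sum>k\<le>m + 2. a (k + 1))"
    using sum.atMost_Suc_shift[of a "m + 2"] by (simp add: numeral_eq_Suc del: sum.atMost_Suc)
  have endpoints: "G'_dist m (m + 3) (m + 3) = 0" "G'_dist m (m + 4) (m + 3) = m + 4"
    "G'_dist m (m + 5) (m + 3) = m + 4"
    by (simp_all add: G'_dist_def G'_depth_def)
  show ?thesis unfolding sum_lessThan_add6 endpoints using reflect shift by linarith
qed

lemma centrality_G'_m4: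
  fixes a :: "nat \<Rightarrow> real"
  shows "(\<Sum>j<m + 6. a (G'_dist m j (m + 4))) = (\<Sum>k\<le>m + 3. a k) + a (m + 4) + a (m + 5)"
proof -
  have "(\<Sum>j\<le>m + 2. a (G'_dist m j (m + 4))) = (\<Sum>j\<le>m + 2. a (m + 4 - j))"
    by (intro sum.cong) (auto simp: G'_dist_def G'_depth_def)
  also have "\<dots> = (\<Sum>k\<le>m + 2. a (k + 2))"
    by (simp add: sum_atMost_reflect del: sum.atMost_Suc)
  finally have reflect: "(\<Sum>j\<le>m + 2. a (G'_dist m j (m + 4))) = (\<Sum>k\<le>m + 2. a (k + 2))" .
  have shift: "(\<Sum>k\<le>m + 3. a k) + a (m + 4) = a 0 + a 1 + (\<Sum>k\<le>m + 2. a (k + 2))"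
    using sum.atMost_Suc_shift[of a "m + 3"] sum.atMost_Suc_shift[of "\<lambda>k. a (Suc k)" "m + 2"]
      sum.atMost_Suc[of a "m + 3"]
    by (simp add: numeral_eq_Suc del: sum.atMost_Suc)
  have endpoints: "G'_dist m (m + 3) (m + 4) = m + 5" "G'_dist m (m + 4) (m + 4) = 0"
    "G'_dist m (m + 5) (m + 4) = 1"
    by (simp_all add: G'_dist_def G'_depth_def)
  show ?thesis unfolding sum_lessThan_add6 endpoints using reflect shift by linarith
qed

lemma centrality_G'_m5:
  fixes a :: "nat \<Rightarrow> real"
  shows "(\<Sum>j<m + 6. a (G'_dist m j (m + 5))) = (\<Sum>k\<le>m + 3. a k) + a (m + 4) + a 1"
proof -
  have "(\<Sum>j\<le>m + 2. a (G'_dist m j (m + 5))) = (\<Sum>j\<le>m + 2. a (m + 3 - j))"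
    by (intro sum.cong) (auto simp: G'_dist_def G'_depth_def)
  also have "\<dots> = (\<Sum>k\<le>m + 2. a (k + 1))"
    by (simp add: sum_atMost_reflect del: sum.atMost_Suc)
  finally have reflect: "(\<Sum>j\<le>m + 2. a (G'_dist m j (m + 5))) = (\<Sum>k\<le>m + 2. a (k + 1))" .
  have shift: "(\<Sum>k\<le>m + 3. a k) = a 0 + (\<Sum>k\<le>m + 2. a (k + 1))"
    using sum.atMost_Suc_shift[of a "m + 2"] by (simp add: numeral_eq_Suc del: sum.atMost_Suc)
  have endpoints: "G'_dist m (m + 3) (m + 5) = m + 4" "G'_dist m (m + 4) (m + 5) = 1"
    "G'_dist m (m + 5) (m + 5) = 0"
    by (simp_all add: G'_dist_def G'_depth_def)
  show ?thesis unfolding sum_lessThan_add6 endpoints using reflect shift by linarith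
qed

text \<open>running_mean m v k is the partial sum a 0 + \<dots> + a k of the weights realizing
  the centralities v: a path node i \<le> m+2 has centrality a 0 + \<dots> + a i + (m+5-i) a (i+1),
  and equating this with v i forces the recursion.\<close>

fun running_mean :: "nat \<Rightarrow> (nat \<Rightarrow> real) \<Rightarrow> nat \<Rightarrow> real" where
  "running_mean m v 0 = v 0"
| "running_mean m v (Suc k) = running_mean m v k + (v k - running_mean m v k) / real (m + 5 - k)"

definition realizing_weights :: "nat \<Rightarrow> (nat \<Rightarrow> real) \<Rightarrow> nat \<Rightarrow> real" where
  "realizing_weights m v k =
     (if k = 0 then v 0
      else if k \<le> m + 3 then running_mean m v k - running_mean m v (k - 1)
      else if k = m + 4 then (v (m + 3) - running_mean m v (m + 3)) / 2
      else v (m + 4) - running_mean m v (m + 3) - (v (m + 3) - running_mean m v (m + 3)) / 2)"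

lemma sum_realizing_weights:
  "k \<le> m + 3 \<Longrightarrow> (\<Sum>i\<le>k. realizing_weights m v i) = running_mean m v k"
  by (induction k) (simp_all add: realizing_weights_def del: running_mean.simps(2))

lemma lin_centrality_realizing_weights:
  assumes "i < m + 6"
  shows "lin_centrality (m + 6) (G' (m + 6)) (realizing_weights m v) i =
    (if i = m + 5 then (running_mean m v (m + 3) + v (m + 3)) / 2 else v i)"
proof -
  let ?a = "realizing_weights m v"
  have prefix: "(\<Sum>k\<le>m + 3. ?a k) = running_mean m v (m + 3)"
    by (simp add: sum_realizing_weights)
  have a1: "?a 1 = 0" by (simp add: realizing_weights_def)
  consider "i \<le> m + 2" | "i = m + 3" | "i = m + 4" | "i = m + 5"
    using assms by linarith
  then show ?thesis
  proof cases
    case 1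
    have "?a (i + 1) = (v i - running_mean m v i) / real (m + 5 - i)"
      using 1 by (simp add: realizing_weights_def)
    then show ?thesis
      using 1 by (simp add: lin_centrality_G' centrality_G'_path sum_realizing_weights)
  qed (simp_all add: lin_centrality_G' centrality_G'_m3 centrality_G'_m4 centrality_G'_m5
        prefix a1,
      simp_all add: realizing_weights_def field_simps)
qed

lemma running_mean_uminus: "running_mean m (\<lambda>i. - v i) k = - running_mean m v k"
  by (induction k) (simp_all add: minus_divide_left)

lemma running_mean_Suc_gap:
  "M - running_mean m v (Suc k) =
    (M - running_mean m v k) * (1 - 1 / real (m + 5 - k)) + (M - v k) / real (m + 5 - k)"
  by (simp add: algebra_simps diff_divide_distrib)

lemma running_mean_le:
  assumes "\<And>i. i \<le> m + 2 \<Longrightarrow> v i \<le> M" and "k \<le> m + 3"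
  shows "running_mean m v k \<le> M"
  using assms(2)
proof (induction k)
  case 0
  then show ?case using assms(1) by simp
next
  case (Suc k)
  then have "0 \<le> (M - running_mean m v k) * (1 - 1 / real (m + 5 - k))"
    and "0 \<le> (M - v k) / real (m + 5 - k)"
    using assms(1) by simp_all
  then show ?case using running_mean_Suc_gap[of M m v k] Suc.prems by linarith
qed

lemma running_mean_gap:
  assumes v: "\<And>i. i \<le> m + 2 \<Longrightarrow> v i \<le> M" and "i < k" and "k \<le> m + 3"
  shows "real (m + 5 - k) * (M - v i) \<le> real (m + 6)^2 * (M - running_mean m v k)"
proof -
  let ?q = "real (m + 6)^2"
  have "Suc i \<le> k" using \<open>i < k\<close> by simp
  then show ?thesis using \<open>k \<le> m + 3\<close>
  proof (induction k rule: dec_induct)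
    case base
    define c where "c = real (m + 5 - i)"
    have c: "real (m + 5 - Suc i) = c - 1" "3 \<le> c" "c \<le> real (m + 6)"
      using base by (simp_all add: c_def)
    have "running_mean m v i \<le> M" using v base by (intro running_mean_le) auto
    then have "0 \<le> (M - running_mean m v i) * (1 - 1 / c)" using c by simp
    then have lower: "(M - v i) / c \<le> M - running_mean m v (Suc i)"
      using running_mean_Suc_gap[of M m v i] by (simp add: c_def)
    have "c * (c - 1) \<le> ?q"
      using c by (simp add: power2_eq_square mult_mono)
    moreover have "0 \<le> M - v i" using v base by simp
    ultimately have "(c * (c - 1)) * ((M - v i) / c) \<le> ?q * ((M - v i) / c)"
      using c by (intro mult_right_mono) auto
    also have "\<dots> \<le> ?q * (M - running_mean m v (Suc i))"
      using lower by (intro mult_left_mono) auto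
    finally show ?case using c by simp
  next
    case (step k)
    define c where "c = real (m + 5 - k)"
    have c: "real (m + 5 - Suc k) = c - 1" "2 \<le> c" using step.prems by (simp_all add: c_def)
    have "0 \<le> (M - v k) / c" using v step.prems c by simp
    then have "(M - running_mean m v k) * (1 - 1 / c) \<le> M - running_mean m v (Suc k)"
      using running_mean_Suc_gap[of M m v k] by (simp add: c_def)
    then have step_lower:
      "?q * ((M - running_mean m v k) * (1 - 1 / c)) \<le> ?q * (M - running_mean m v (Suc k))"
      by (intro mult_left_mono) auto
    have "real (m + 5 - Suc k) * (M - v i) = (c * (M - v i)) * (1 - 1 / c)"
      unfolding c(1) using c(2) by (simp add: field_simps)
    also have "\<dots> \<le> (?q * (M - running_mean m v k)) * (1 - 1 / c)"
      using step.IH step.prems c by (intro mult_right_mono) (auto simp: c_def)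
    also have "\<dots> \<le> ?q * (M - running_mean m v (Suc k))"
      using step_lower by (simp only: mult.assoc)
    finally show ?case .
  qed
qed

lemma running_mean_midpoint_le:
  assumes v: "\<And>i. i \<le> m + 3 \<Longrightarrow> v i \<le> M" and "i \<le> m + 3"
  shows "(running_mean m v (m + 3) + v (m + 3)) / 2 \<le> M - (M - v i) / real (m + 6)^2"
proof -
  let ?q = "real (m + 6)^2" and ?S = "running_mean m v (m + 3)"
  have "(6::real)^2 \<le> ?q" by (intro power_mono) auto
  then have "(2::real) \<le> ?q" by simp
  moreover have "0 \<le> M - v i" using v \<open>i \<le> m + 3\<close> by simp
  ultimately have q_bound: "(M - v i) / ?q \<le> (M - v i) / 2"
    by (intro divide_left_mono) auto
  have S: "?S \<le> M" using v by (intro running_mean_le) auto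
  consider "i = m + 3" | "i \<le> m + 2" using \<open>i \<le> m + 3\<close> by linarith
  then show ?thesis
  proof cases
    case 1
    then show ?thesis using S q_bound by simp
  next
    case 2
    have "2 * (M - v i) \<le> ?q * (M - ?S)"
      using running_mean_gap[of m v M i "m + 3"] v 2 by simp
    then have "(M - v i) / ?q \<le> (M - ?S) / 2" by (simp add: field_simps)
    then show ?thesis using v[of "m + 3"] by simp
  qed
qed

lemma permutes_preimage_le:
  fixes \<pi> :: "nat \<Rightarrow> nat"
  assumes \<pi>: "\<pi> permutes {..<m + 6}" and "\<pi> t = m + 5"
    and "p < m + 6" "q < m + 6" "p \<noteq> q" "p \<noteq> t" "q \<noteq> t"
  obtains s where "s \<in> {p, q}" and "\<pi> s \<le> m + 3"
proof -
  have "inj \<pi>" using \<pi> by (rule permutes_inj)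
  then have "\<pi> p \<noteq> \<pi> q" "\<pi> p \<noteq> m + 5" "\<pi> q \<noteq> m + 5"
    using assms(2,5-7) by (metis injD)+
  moreover have "\<pi> p < m + 6" "\<pi> q < m + 6" using assms(3,4) permutes_in_image[OF \<pi>] by auto
  ultimately have "\<pi> p \<le> m + 3 \<or> \<pi> q \<le> m + 3" by linarith
  then show ?thesis using that by blast
qed

lemma representable_G'_if_last_in_middle:
  assumes \<pi>: "\<pi> permutes {..<m + 6}" and t: "\<pi> t = m + 5" "2 \<le> t" "t \<le> m + 3"
  shows "representable (m + 6) (G' (m + 6)) \<pi>"
proof -
  define N :: real where "N = real (m + 6)"
  define c :: real where "c = N^3"
  define h :: "nat \<Rightarrow> real" where "h s = (if s < t then c else 0) - real s" for s
  define v where "v i = h (inv \<pi> i)" for i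
  define X where "X = (running_mean m v (m + 3) + v (m + 3)) / 2"
  have N: "6 \<le> N" "0 \<le> c" "c / N^2 = N"
    by (simp_all add: N_def c_def power2_eq_square power3_eq_cube)
  have v_\<pi>: "v (\<pi> s) = h s" for s
    unfolding v_def using permutes_inverses(2)[OF \<pi>] by simp
  have centrality: "lin_centrality (m + 6) (G' (m + 6)) (realizing_weights m v) (\<pi> u) =
      (if u = t then X else h u)" if "u < m + 6" for u
  proof -
    have "\<pi> u = m + 5 \<longleftrightarrow> u = t" using t(1) permutes_inj[OF \<pi>] by (metis injD)
    moreover have "\<pi> u < m + 6" using that permutes_in_image[OF \<pi>] by simp
    ultimately show ?thesis by (simp add: lin_centrality_realizing_weights X_def v_\<pi>)
  qed
  have "X < h (t - 1)"
  proof -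
    obtain s where s: "s \<in> {t + 1, t + 2}" "\<pi> s \<le> m + 3"
      using permutes_preimage_le[OF \<pi> t(1), of "t + 1" "t + 2"] t by auto
    have "v i \<le> c" for i
      unfolding v_def h_def using N by simp
    moreover have "v (\<pi> s) \<le> 0" using s by (auto simp: v_\<pi> h_def)
    ultimately have "X \<le> c - (c - v (\<pi> s)) / N^2"
      unfolding X_def N_def using s(2) by (intro running_mean_midpoint_le) auto
    also have "\<dots> \<le> c - N"
      using \<open>v (\<pi> s) \<le> 0\<close> N by (smt (verit) divide_right_mono zero_le_power2)
    also have "\<dots> < h (t - 1)" using t by (simp add: h_def N_def)
    finally show ?thesis .
  qed
  moreover have "h (t + 1) < X"
  proof -
    obtain s where s: "s \<in> {0, 1}" "\<pi> s \<le> m + 3"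
      using permutes_preimage_le[OF \<pi> t(1), of 0 1] t by auto
    have "- v i \<le> N" if "i \<le> m + 3" for i
    proof -
      have "inv \<pi> i < m + 6" using that permutes_in_image[OF permutes_inv[OF \<pi>]] by simp
      then show ?thesis unfolding v_def h_def using N by (simp add: N_def)
    qed
    moreover have "- v (\<pi> s) \<le> N - c" using s t by (auto simp: v_\<pi> h_def N_def)
    ultimately have "(running_mean m (\<lambda>i. - v i) (m + 3) + - v (m + 3)) / 2
        \<le> N - (N - - v (\<pi> s)) / N^2"
      unfolding N_def using s(2) by (intro running_mean_midpoint_le) auto
    also have "\<dots> \<le> 0"
      using \<open>- v (\<pi> s) \<le> N - c\<close> N by (smt (verit) divide_right_mono zero_le_power2)
    finally show ?thesis by (simp add: running_mean_uminus X_def h_def)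
  qed
  ultimately show ?thesis
    unfolding representable_def
    by (intro exI[of _ "realizing_weights m v"] allI impI)
      (auto simp: centrality h_def)
qed

lemma card_permutes_with_value:
  assumes "finite S" and "a \<in> S" and "b \<in> S"
  shows "card {p. p permutes S \<and> p a = b} = fact (card S - 1)"
proof -
  let ?T = "transpose a b"
  have "{p. p permutes S \<and> p a = b} = (\<lambda>q. ?T \<circ> q) ` {q. q permutes S - {a}}"
  proof (intro set_eqI iffI)
    fix p assume "p \<in> {p. p permutes S \<and> p a = b}"
    then have p: "p permutes S" "p a = b" by auto
    have "?T \<circ> p permutes S"
      using p(1) permutes_swap_id[OF assms(2,3)] by (rule permutes_compose)
    moreover have "(?T \<circ> p) a = a" using p(2) by simp
    ultimately have "?T \<circ> p permutes S - {a}" by (auto elim: permutes_superset)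
    moreover have "p = ?T \<circ> (?T \<circ> p)" by (simp add: comp_assoc[symmetric])
    ultimately show "p \<in> (\<lambda>q. ?T \<circ> q) ` {q. q permutes S - {a}}" by blast
  next
    fix p assume "p \<in> (\<lambda>q. ?T \<circ> q) ` {q. q permutes S - {a}}"
    then obtain q where q: "q permutes S - {a}" and p: "p = ?T \<circ> q" by blast
    have "q permutes S" using q by (rule permutes_subset) auto
    then have "p permutes S"
      unfolding p using permutes_swap_id[OF assms(2,3)] by (rule permutes_compose)
    moreover have "q a = a" using q by (rule permutes_not_in) simp
    ultimately show "p \<in> {p. p permutes S \<and> p a = b}" by (simp add: p)
  qed
  moreover have "inj_on (\<lambda>q. ?T \<circ> q) {q. q permutes S - {a}}"
  proof (rule inj_onI)
    fix q q' assume "?T \<circ> q = ?T \<circ> q'"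
    then have "?T \<circ> (?T \<circ> q) = ?T \<circ> (?T \<circ> q')" by simp
    then show "q = q'" by (simp add: comp_assoc[symmetric])
  qed
  ultimately have "card {p. p permutes S \<and> p a = b} = card {q. q permutes S - {a}}"
    by (simp add: card_image)
  also have "\<dots> = fact (card S - 1)"
    using assms by (simp add: card_permutations)
  finally show ?thesis .
qed

lemma card_permutes_preimage_in:
  assumes "T \<subseteq> {..<n}" and "b < n"
  shows "card {\<pi>. \<pi> permutes {..<n} \<and> (\<exists>t\<in>T. \<pi> t = b)} = card T * fact (n - 1)"
proof -
  let ?P = "\<lambda>t. {\<pi>. \<pi> permutes {..<n} \<and> \<pi> t = b}"
  have "{\<pi>. \<pi> permutes {..<n} \<and> (\<exists>t\<in>T. \<pi> t = b)} = (\<Union>t\<in>T. ?P t)" by auto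
  moreover have "finite T" using assms(1) finite_subset by blast
  moreover have "finite (?P t)" for t
    by (rule finite_subset[OF _ finite_permutations[of "{..<n}"]]) auto
  moreover have "?P t \<inter> ?P t' = {}" if "t \<noteq> t'" for t t'
    using that permutes_inj by (fastforce dest: injD)
  ultimately have "card {\<pi>. \<pi> permutes {..<n} \<and> (\<exists>t\<in>T. \<pi> t = b)}
      = (\<Sum>t\<in>T. card (?P t))"
    by (simp add: card_UN_disjoint)
  also have "\<dots> = (\<Sum>t\<in>T. fact (n - 1))"
    using assms by (intro sum.cong) (auto simp: card_permutes_with_value)
  finally show ?thesis by simp
qed

lemma R_ratio_le_1: "R_ratio n E \<le> 1"
proof -
  have "card {\<pi>. \<pi> permutes {..<n} \<and> representable n E \<pi>}
      \<le> card {\<pi>. \<pi> permutes {..<n}}"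
    by (rule card_mono[OF finite_permutations]) auto
  also have "\<dots> = fact n" by (rule card_permutations) auto
  finally have "real (card {\<pi>. \<pi> permutes {..<n} \<and> representable n E \<pi>}) \<le> fact n"
    by (metis of_nat_fact of_nat_le_iff)
  then show ?thesis unfolding R_ratio_def by simp
qed

lemma R_ratio_ge:
  assumes "\<And>\<pi>. \<pi> permutes {..<n} \<Longrightarrow> Q \<pi> \<Longrightarrow> representable n E \<pi>"
  shows "real (card {\<pi>. \<pi> permutes {..<n} \<and> Q \<pi>}) / fact n \<le> R_ratio n E"
proof -
  have "finite {\<pi>. \<pi> permutes {..<n} \<and> representable n E \<pi>}"
    by (rule finite_subset[OF _ finite_permutations[of "{..<n}"]]) auto
  then have "card {\<pi>. \<pi> permutes {..<n} \<and> Q \<pi>}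
      \<le> card {\<pi>. \<pi> permutes {..<n} \<and> representable n E \<pi>}"
    by (rule card_mono) (use assms in auto)
  then show ?thesis unfolding R_ratio_def by (simp add: divide_right_mono)
qed

lemma R_ratio_G'_ge: "real (m + 2) / real (m + 6) \<le> R_ratio (m + 6) (G' (m + 6))"
proof -
  let ?Q = "\<lambda>\<pi>. \<exists>t\<in>{2..m + 3}. \<pi> t = m + 5"
  have "card {\<pi>. \<pi> permutes {..<m + 6} \<and> ?Q \<pi>} = card {2..m + 3} * fact (m + 6 - 1)"
    by (rule card_permutes_preimage_in) auto
  also have "\<dots> = (m + 2) * fact (m + 5)" by (simp add: add.commute)
  finally have card_eq: "card {\<pi>. \<pi> permutes {..<m + 6} \<and> ?Q \<pi>} = (m + 2) * fact (m + 5)" .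
  have "(fact (m + 6) :: real) = real (m + 6) * fact (m + 5)"
    by (simp add: fact_Suc numeral_eq_Suc)
  then have ratio: "real (card {\<pi>. \<pi> permutes {..<m + 6} \<and> ?Q \<pi>}) / fact (m + 6)
      = real (m + 2) / real (m + 6)"
    unfolding card_eq of_nat_mult of_nat_fact by (simp add: nonzero_mult_divide_mult_cancel_right)
  have "real (card {\<pi>. \<pi> permutes {..<m + 6} \<and> ?Q \<pi>}) / fact (m + 6)
      \<le> R_ratio (m + 6) (G' (m + 6))"
  proof (rule R_ratio_ge)
    fix \<pi> assume "\<pi> permutes {..<m + 6}" and "?Q \<pi>"
    then show "representable (m + 6) (G' (m + 6)) \<pi>"
      by (elim bexE) (rule representable_G'_if_last_in_middle; auto)
  qed
  then show ?thesis unfolding ratio .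
qed

theorem corollary6:
  shows "(\<lambda>n. R_ratio n (G' n)) \<longlonglongrightarrow> 1"
proof (rule LIMSEQ_offset[where k = 6])
  have "(\<lambda>m. 4 / real (m + 6)) \<longlonglongrightarrow> 0"
    using LIMSEQ_ignore_initial_segment[OF lim_const_over_n[of 4], of 6] by simp
  then have "(\<lambda>m. 1 - 4 / real (m + 6)) \<longlonglongrightarrow> 1 - 0"
    by (intro tendsto_diff tendsto_const)
  moreover have "1 - 4 / real (m + 6) = real (m + 2) / real (m + 6)" for m
    by (simp add: field_simps)
  ultimately have lower: "(\<lambda>m. real (m + 2) / real (m + 6)) \<longlonglongrightarrow> 1" by simp
  show "(\<lambda>m. R_ratio (m + 6) (G' (m + 6))) \<longlonglongrightarrow> 1"
    by (rule tendsto_sandwich[OF _ _ lower tendsto_const])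
      (intro always_eventually allI R_ratio_G'_ge R_ratio_le_1)+
qed

end
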